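(* Let $(M,K)$ be a Cartan space, let $v:[0,\infty)\to\mathbb{R}$ be smooth and let $\alpha,\beta$ be real constants with $\alpha,\beta>0$ and $\alpha+2\tau v(\tau)>0$ on $T^*M_0$, where $\tau=\frac12K^2$. Let $G=G_{ij}dx^idx^j+G^{ij}\delta p_i\delta p_j$ with $G_{ij}=\frac{1}{\beta}g_{ij}+\frac{v(\tau)}{\alpha\beta}p_ip_j$ and $G^{ij}=\beta g^{ij}-\frac{v\beta}{\alpha+2\tau v}p^ip^j$, and let $J$ be defined by $J(\delta_i)=G_{ik}\dot\partial^k$, $J(\dot\partial^i)=-G^{ik}\delta_k$. Then $(T^*M_0,G,J)$ is an almost K\"ahler manifold, i.e. $J^2=-I$, $G(JX,JY)=G(X,Y)$ for all vector fields $X,Y$, and the fundamental 2-form $\theta(X,Y)=G(X,JY)$ is closed.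
   Context: $M$ is an $n$-dimensional smooth manifold, $T^*M$ its cotangent bundle with local coordinates $(x^i,p_i)$, $T^*M_0=T^*M\setminus\{0\}$; $\partial_i=\partial/\partial x^i$, $\dot\partial^i=\partial/\partial p_i$; summation convention. A Cartan structure is $K:T^*M\to[0,\infty)$, smooth on $T^*M_0$, with $K(x,\lambda p)=\lambda K(x,p)$ for $\lambda>0$, such that $g^{ij}=\frac12\dot\partial^i\dot\partial^jK^2$ is positive definite on $T^*M_0$; $(g_{ij})$ is its inverse and $p^i=g^{ij}p_j$. Let $\gamma^i_{jk}=\frac12g^{is}(\partial_kg_{js}+\partial_jg_{sk}-\partial_sg_{jk})$, $\gamma^0_{jk}=\gamma^i_{jk}p_i$, $\gamma^0_{h0}=\gamma^i_{hk}p_ip^k$, and $N_{ij}=\gamma^0_{ij}-\frac12\gamma^0_{h0}\dot\partial^hg_{ij}$. Put $\delta_i=\partial_i+N_{ij}\dot\partial^j$ and $\delta p_i=dp_i-N_{ji}dx^j$; $(\delta_i,\dot\partial^i)$ is a local frame on $T^*M_0$ with dual coframe $(dx^i,\delta p_i)$. *)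

theory Defs
  imports "HOL-Analysis.Analysis"
begin

(* Local (single chart) model: M is represented by an open coordinate domain U in R^n,
   T*U has coordinates (x,p) in R^n x R^n, a tangent vector to T*U at (x,p) is an element
   (a,b) of R^n x R^n, meaning a^i d/dx^i + b_i d/dp_i. *)

type_synonym 'n pt = "(real^'n) \<times> (real^'n)"

definition pd :: "('a::real_normed_vector \<Rightarrow> real) \<Rightarrow> 'a \<Rightarrow> 'a \<Rightarrow> real" where
  "pd f u z = frechet_derivative f (at z) u"

fun iter_pd :: "'a list \<Rightarrow> ('a::real_normed_vector \<Rightarrow> real) \<Rightarrow> 'a \<Rightarrow> real" where
  "iter_pd [] f = f"
| "iter_pd (u # us) f = pd (iter_pd us f) u"

definition smooth_on :: "'a set \<Rightarrow> ('a::real_normed_vector \<Rightarrow> real) \<Rightarrow> bool" where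
  "smooth_on S f \<longleftrightarrow> (\<forall>us. \<forall>z\<in>S. iter_pd us f differentiable (at z))"

definition smooth_on_halfline :: "(real \<Rightarrow> real) \<Rightarrow> bool" where
  "smooth_on_halfline v \<longleftrightarrow>
     (\<exists>w S. open S \<and> {0..} \<subseteq> S \<and> smooth_on S w \<and> (\<forall>t\<ge>0. w t = v t))"

definition dxv :: "'n::finite \<Rightarrow> 'n pt" where "dxv i = (axis i 1, 0)"
definition dpv :: "'n::finite \<Rightarrow> 'n pt" where "dpv i = (0, axis i 1)"

definition T0 :: "(real^'n) set \<Rightarrow> 'n pt set" where
  "T0 U = {z. fst z \<in> U \<and> snd z \<noteq> 0}"

definition ginvK :: "('n::finite pt \<Rightarrow> real) \<Rightarrow> 'n \<Rightarrow> 'n \<Rightarrow> 'n pt \<Rightarrow> real" where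
  "ginvK K i j z = (1/2) * pd (pd (\<lambda>w. (K w)^2) (dpv j)) (dpv i) z"

definition cartan_structure :: "(real^'n::finite) set \<Rightarrow> ('n pt \<Rightarrow> real) \<Rightarrow> bool" where
  "cartan_structure U K \<longleftrightarrow> open U
     \<and> (\<forall>x\<in>U. \<forall>p. K (x, p) \<ge> 0)
     \<and> smooth_on (T0 U) K
     \<and> (\<forall>x\<in>U. \<forall>p. \<forall>l>0. K (x, l *\<^sub>R p) = l * K (x, p))
     \<and> (\<forall>z\<in>T0 U. \<forall>\<xi>::real^'n. \<xi> \<noteq> 0 \<longrightarrow> (\<Sum>i\<in>UNIV. \<Sum>j\<in>UNIV. ginvK K i j z * \<xi>$i * \<xi>$j) > 0)"

definition gK :: "('n::finite pt \<Rightarrow> real) \<Rightarrow> 'n \<Rightarrow> 'n \<Rightarrow> 'n pt \<Rightarrow> real" where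
  "gK K i j z = matrix_inv (\<chi> a b. ginvK K a b z) $ i $ j"

definition pup :: "('n::finite pt \<Rightarrow> real) \<Rightarrow> 'n \<Rightarrow> 'n pt \<Rightarrow> real" where
  "pup K i z = (\<Sum>j\<in>UNIV. ginvK K i j z * snd z $ j)"

definition tauK :: "('n::finite pt \<Rightarrow> real) \<Rightarrow> 'n pt \<Rightarrow> real" where
  "tauK K z = (K z)^2 / 2"

definition gam :: "('n::finite pt \<Rightarrow> real) \<Rightarrow> 'n \<Rightarrow> 'n \<Rightarrow> 'n \<Rightarrow> 'n pt \<Rightarrow> real" where
  "gam K i j k z = (1/2) * (\<Sum>s\<in>UNIV. ginvK K i s z *
      (pd (gK K j s) (dxv k) z + pd (gK K s k) (dxv j) z - pd (gK K j k) (dxv s) z))"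

definition gam0 :: "('n::finite pt \<Rightarrow> real) \<Rightarrow> 'n \<Rightarrow> 'n \<Rightarrow> 'n pt \<Rightarrow> real" where
  "gam0 K j k z = (\<Sum>i\<in>UNIV. gam K i j k z * snd z $ i)"

definition gam0h0 :: "('n::finite pt \<Rightarrow> real) \<Rightarrow> 'n \<Rightarrow> 'n pt \<Rightarrow> real" where
  "gam0h0 K h z = (\<Sum>i\<in>UNIV. \<Sum>k\<in>UNIV. gam K i h k z * snd z $ i * pup K k z)"

definition NK :: "('n::finite pt \<Rightarrow> real) \<Rightarrow> 'n \<Rightarrow> 'n \<Rightarrow> 'n pt \<Rightarrow> real" where
  "NK K i j z = gam0 K i j z - (1/2) * (\<Sum>h\<in>UNIV. gam0h0 K h z * pd (gK K i j) (dpv h) z)"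

text \<open>delta_i = d_i + N_ij dot-d^j, as a coordinate tangent vector\<close>
definition deltav :: "('n::finite pt \<Rightarrow> real) \<Rightarrow> 'n pt \<Rightarrow> 'n \<Rightarrow> 'n pt" where
  "deltav K z i = (axis i 1, \<chi> j. NK K i j z)"

text \<open>dual coframe dx^i and delta p_i = dp_i - N_ji dx^j evaluated on a tangent vector X\<close>
definition dxc :: "'n::finite pt \<Rightarrow> 'n \<Rightarrow> real" where "dxc X i = fst X $ i"
definition dpc :: "('n::finite pt \<Rightarrow> real) \<Rightarrow> 'n pt \<Rightarrow> 'n pt \<Rightarrow> 'n \<Rightarrow> real" where
  "dpc K z X i = snd X $ i - (\<Sum>j\<in>UNIV. NK K j i z * fst X $ j)"

definition Glow :: "('n::finite pt \<Rightarrow> real) \<Rightarrow> (real \<Rightarrow> real) \<Rightarrow> real \<Rightarrow> real \<Rightarrow> 'n \<Rightarrow> 'n \<Rightarrow> 'n pt \<Rightarrow> real" where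
  "Glow K v \<alpha> \<beta> i j z = gK K i j z / \<beta> + v (tauK K z) / (\<alpha> * \<beta>) * snd z $ i * snd z $ j"

definition Gup :: "('n::finite pt \<Rightarrow> real) \<Rightarrow> (real \<Rightarrow> real) \<Rightarrow> real \<Rightarrow> real \<Rightarrow> 'n \<Rightarrow> 'n \<Rightarrow> 'n pt \<Rightarrow> real" where
  "Gup K v \<alpha> \<beta> i j z = \<beta> * ginvK K i j z
     - v (tauK K z) * \<beta> / (\<alpha> + 2 * tauK K z * v (tauK K z)) * pup K i z * pup K j z"

definition Gmet :: "('n::finite pt \<Rightarrow> real) \<Rightarrow> (real \<Rightarrow> real) \<Rightarrow> real \<Rightarrow> real \<Rightarrow> 'n pt \<Rightarrow> 'n pt \<Rightarrow> 'n pt \<Rightarrow> real" where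
  "Gmet K v \<alpha> \<beta> z X Y =
     (\<Sum>i\<in>UNIV. \<Sum>j\<in>UNIV. Glow K v \<alpha> \<beta> i j z * dxc X i * dxc Y j)
   + (\<Sum>i\<in>UNIV. \<Sum>j\<in>UNIV. Gup K v \<alpha> \<beta> i j z * dpc K z X i * dpc K z Y j)"

definition Jmap :: "('n::finite pt \<Rightarrow> real) \<Rightarrow> (real \<Rightarrow> real) \<Rightarrow> real \<Rightarrow> real \<Rightarrow> 'n pt \<Rightarrow> 'n pt \<Rightarrow> 'n pt" where
  "Jmap K v \<alpha> \<beta> z X =
     (\<Sum>k\<in>UNIV. (\<Sum>i\<in>UNIV. dxc X i * Glow K v \<alpha> \<beta> i k z) *\<^sub>R dpv k)
   + (\<Sum>k\<in>UNIV. (- (\<Sum>i\<in>UNIV. dpc K z X i * Gup K v \<alpha> \<beta> i k z)) *\<^sub>R deltav K z k)"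

definition theta :: "('n::finite pt \<Rightarrow> real) \<Rightarrow> (real \<Rightarrow> real) \<Rightarrow> real \<Rightarrow> real \<Rightarrow> 'n pt \<Rightarrow> 'n pt \<Rightarrow> 'n pt \<Rightarrow> real" where
  "theta K v \<alpha> \<beta> z X Y = Gmet K v \<alpha> \<beta> z X (Jmap K v \<alpha> \<beta> z Y)"

end

theory Submission
  imports Defs "HOL-Library.Product_Plus"
begin

text \<open>In the adapted frame \<open>(\<delta>\<^sub>i, \<partial>\<^sup>i)\<close> the matrices \<open>(G\<^sub>i\<^sub>j)\<close> and \<open>(G\<^sup>i\<^sup>j)\<close> are
  mutually inverse: \<open>G\<^sup>i\<^sup>j\<close> is a rank-one correction of \<open>\<beta> g\<^sup>i\<^sup>j\<close>, and by Euler's identity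
  \<open>p\<^sub>i p\<^sup>i = K\<^sup>2 = 2\<tau>\<close> the Sherman--Morrison formula produces exactly the coefficient
  \<open>v\<beta>/(\<alpha> + 2\<tau>v)\<close>. With this, \<open>J\<^sup>2 = -I\<close> and the \<open>J\<close>-invariance of \<open>G\<close> are matrix identities.
  Since the nonlinear connection \<open>N\<^sub>i\<^sub>j\<close> is symmetric, the fundamental form collapses to
  \<open>\<theta> = \<delta>p\<^sub>i \<and> dx\<^sup>i = dp\<^sub>i \<and> dx\<^sup>i\<close>, which has constant coefficients in canonical
  coordinates and is therefore closed. The only analysis needed is the symmetry of \<open>g\<^sup>i\<^sup>j\<close>
  (Schwarz's theorem for \<open>K\<^sup>2\<close>) and Euler's identity for the homogeneous function \<open>K\<close>.\<close>

lemma has_real_derivative_pd_line: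
  fixes F :: "'a::real_normed_vector \<Rightarrow> real"
  assumes "F differentiable (at (w + s *\<^sub>R a))"
  shows "((\<lambda>s. F (w + s *\<^sub>R a)) has_real_derivative pd F a (w + s *\<^sub>R a)) (at s)"
proof -
  let ?y = "w + s *\<^sub>R a"
  have F: "(F has_derivative frechet_derivative F (at ?y)) (at ?y)"
    using assms frechet_derivative_works by blast
  have lin: "linear (frechet_derivative F (at ?y))"
    using F has_derivative_linear by blast
  have L: "((\<lambda>s. w + s *\<^sub>R a) has_derivative (\<lambda>s. s *\<^sub>R a)) (at s)"
    by (auto intro!: derivative_eq_intros)
  have "((F \<circ> (\<lambda>s. w + s *\<^sub>R a)) has_derivative (frechet_derivative F (at ?y) \<circ> (\<lambda>s. s *\<^sub>R a))) (at s)"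
    by (rule diff_chain_at[OF L]) (use F in simp)
  moreover have "(frechet_derivative F (at ?y) \<circ> (\<lambda>s. s *\<^sub>R a)) = (\<lambda>t. pd F a ?y * t)"
    using linear.scaleR[OF lin] by (auto simp: pd_def fun_eq_iff)
  ultimately show ?thesis
    by (simp add: has_field_derivative_def o_def)
qed

lemma pd_eq_line_derivative:
  fixes F :: "'a::real_normed_vector \<Rightarrow> real"
  assumes "F differentiable (at z)"
    and "((\<lambda>t. F (z + t *\<^sub>R u)) has_real_derivative D) (at 0)"
  shows "pd F u z = D"
proof -
  have "((\<lambda>t. F (z + t *\<^sub>R u)) has_real_derivative pd F u (z + 0 *\<^sub>R u)) (at 0)"
    by (rule has_real_derivative_pd_line) (use assms in simp)
  then show ?thesis using assms(2) DERIV_unique by fastforce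
qed

lemma pd_cong_open:
  assumes "open S" "z \<in> S" "\<And>w. w \<in> S \<Longrightarrow> f w = g w"
  shows "pd f u z = pd g u z"
proof -
  have "(f has_derivative D) (at z) \<longleftrightarrow> (g has_derivative D) (at z)" for D
    using has_derivative_transform_within_open[of f D z UNIV S g]
      has_derivative_transform_within_open[of g D z UNIV S f] assms by auto
  then show ?thesis unfolding pd_def frechet_derivative_def by simp
qed

lemma pd_const_on_open:
  assumes "open S" "z \<in> S" "\<And>w. w \<in> S \<Longrightarrow> f w = c"
  shows "pd f u z = 0"
proof -
  have "pd f u z = pd (\<lambda>_. c) u z" by (rule pd_cong_open[OF assms])
  also have "frechet_derivative (\<lambda>_::'a. c) (at z) = (\<lambda>_. 0)"
    by (rule frechet_derivative_at[symmetric]) simp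
  then have "pd (\<lambda>_. c) u z = 0" by (simp add: pd_def)
  finally show ?thesis .
qed

lemma pd_sum_direction:
  fixes F :: "'a::real_normed_vector \<Rightarrow> real"
  assumes "F differentiable (at z)" "finite I"
  shows "pd F (\<Sum>i\<in>I. c i *\<^sub>R e i) z = (\<Sum>i\<in>I. c i * pd F (e i) z)"
proof -
  have "linear (frechet_derivative F (at z))"
    using assms frechet_derivative_works has_derivative_linear by blast
  then show ?thesis unfolding pd_def
    by (simp add: linear_sum linear.scaleR)
qed

lemma pd_sum:
  fixes F :: "'i \<Rightarrow> 'a::real_normed_vector \<Rightarrow> real"
  assumes "\<And>j. j \<in> I \<Longrightarrow> F j differentiable (at z)" "finite I"
  shows "pd (\<lambda>w. \<Sum>j\<in>I. c j * F j w) u z = (\<Sum>j\<in>I. c j * pd (F j) u z)"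
proof -
  have "((\<lambda>w. \<Sum>j\<in>I. c j * F j w) has_derivative
      (\<lambda>h. \<Sum>j\<in>I. c j * frechet_derivative (F j) (at z) h)) (at z)"
    using assms by (auto intro!: derivative_eq_intros frechet_derivative_works[THEN iffD1])
  then show ?thesis unfolding pd_def using frechet_derivative_at by metis
qed

lemma pd_mult:
  fixes f g :: "'a::real_normed_vector \<Rightarrow> real"
  assumes "f differentiable (at z)" "g differentiable (at z)"
  shows "pd (\<lambda>w. f w * g w) u z = f z * pd g u z + pd f u z * g z"
proof -
  have "((\<lambda>w. f w * g w) has_derivative
      (\<lambda>h. f z * frechet_derivative g (at z) h + frechet_derivative f (at z) h * g z)) (at z)"
    using assms by (auto intro!: derivative_eq_intros frechet_derivative_works[THEN iffD1])
  then show ?thesis unfolding pd_def using frechet_derivative_at by metis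
qed

lemma pd_cmult:
  fixes f :: "'a::real_normed_vector \<Rightarrow> real"
  assumes "f differentiable (at z)"
  shows "pd (\<lambda>w. c * f w) u z = c * pd f u z"
  using pd_mult[of "\<lambda>_. c" z f u] assms pd_const_on_open[of UNIV z "\<lambda>_. c" c u] by simp

lemma small_square_in_ball:
  fixes z a b :: "'a::real_normed_vector"
  assumes "m > 0"
  obtains h where "h > 0"
    and "\<And>s t. 0 \<le> s \<Longrightarrow> s \<le> h \<Longrightarrow> 0 \<le> t \<Longrightarrow> t \<le> h \<Longrightarrow> dist (z + s *\<^sub>R a + t *\<^sub>R b) z < m"
proof
  define h where "h = m / (norm a + norm b + 1)"
  have pos: "norm a + norm b + 1 > 0" by (smt (verit) norm_ge_zero)
  show "h > 0" using assms pos by (simp add: h_def)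
  fix s t assume st: "0 \<le> s" "s \<le> h" "0 \<le> t" "t \<le> h"
  have "dist (z + s *\<^sub>R a + t *\<^sub>R b) z \<le> s * norm a + t * norm b"
    using norm_triangle_ineq[of "s *\<^sub>R a" "t *\<^sub>R b"] st by (simp add: dist_norm)
  also have "\<dots> \<le> h * norm a + h * norm b"
    using st by (intro add_mono mult_right_mono) auto
  also have "\<dots> = h * (norm a + norm b)"
    by (simp add: distrib_left)
  also have "\<dots> < h * (norm a + norm b + 1)"
    using \<open>h > 0\<close> by simp
  also have "\<dots> = m" using pos by (simp add: h_def)
  finally show "dist (z + s *\<^sub>R a + t *\<^sub>R b) z < m" .
qed

lemma second_difference_mvt:
  fixes f :: "'a::real_normed_vector \<Rightarrow> real"
  assumes h: "h > 0"
    and square: "\<And>s t. 0 \<le> s \<Longrightarrow> s \<le> h \<Longrightarrow> 0 \<le> t \<Longrightarrow> t \<le> h \<Longrightarrow> z + s *\<^sub>R a + t *\<^sub>R b \<in> S"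
    and d0: "\<And>w. w \<in> S \<Longrightarrow> f differentiable (at w)"
    and d1: "\<And>w. w \<in> S \<Longrightarrow> pd f a differentiable (at w)"
  obtains s t where "0 < s" "s < h" "0 < t" "t < h"
    and "f (z + h *\<^sub>R a + h *\<^sub>R b) - f (z + h *\<^sub>R a) - f (z + h *\<^sub>R b) + f z
      = h * h * pd (pd f a) b (z + s *\<^sub>R a + t *\<^sub>R b)"
proof -
  define g where "g s = f ((z + h *\<^sub>R b) + s *\<^sub>R a) - f (z + s *\<^sub>R a)" for s
  have "DERIV g s :> pd f a ((z + h *\<^sub>R b) + s *\<^sub>R a) - pd f a (z + s *\<^sub>R a)"
    if "0 \<le> s" "s \<le> h" for s
  proof -
    have mem: "z + h *\<^sub>R b + s *\<^sub>R a \<in> S" "z + s *\<^sub>R a \<in> S"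
      using square[of s h] square[of s 0] that h by (simp_all add: algebra_simps)
    show ?thesis unfolding g_def
      by (intro DERIV_diff has_real_derivative_pd_line d0 mem)
  qed
  from MVT2[OF h this] obtain s where s: "0 < s" "s < h"
    and gs: "g h - g 0 = (h - 0) * (pd f a ((z + h *\<^sub>R b) + s *\<^sub>R a) - pd f a (z + s *\<^sub>R a))"
    by blast
  define k where "k t = pd f a ((z + s *\<^sub>R a) + t *\<^sub>R b)" for t
  have "DERIV k t :> pd (pd f a) b ((z + s *\<^sub>R a) + t *\<^sub>R b)" if "0 \<le> t" "t \<le> h" for t
    unfolding k_def by (intro has_real_derivative_pd_line d1) (use square[of s t] that s in simp)
  from MVT2[OF h this] obtain t where t: "0 < t" "t < h"
    and kt: "k h - k 0 = (h - 0) * pd (pd f a) b ((z + s *\<^sub>R a) + t *\<^sub>R b)"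
    by blast
  have "f (z + h *\<^sub>R a + h *\<^sub>R b) - f (z + h *\<^sub>R a) - f (z + h *\<^sub>R b) + f z = g h - g 0"
    by (simp add: g_def algebra_simps)
  also have "\<dots> = h * (k h - k 0)" using gs by (simp add: k_def algebra_simps)
  also have "\<dots> = h * h * pd (pd f a) b (z + s *\<^sub>R a + t *\<^sub>R b)" using kt by simp
  finally show ?thesis by (rule that[OF s t])
qed

text \<open>Schwarz's theorem: both mixed second derivatives are limits of the same second
  difference quotient over shrinking squares.\<close>

lemma pd_pd_commute:
  fixes f :: "'a::real_normed_vector \<Rightarrow> real"
  assumes S: "open S" "z \<in> S"
    and d0: "\<And>w. w \<in> S \<Longrightarrow> f differentiable (at w)"
    and d1a: "\<And>w. w \<in> S \<Longrightarrow> pd f a differentiable (at w)"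
    and d1b: "\<And>w. w \<in> S \<Longrightarrow> pd f b differentiable (at w)"
    and d2a: "pd (pd f a) b differentiable (at z)"
    and d2b: "pd (pd f b) a differentiable (at z)"
  shows "pd (pd f a) b z = pd (pd f b) a z"
proof (rule ccontr)
  let ?F1 = "pd (pd f a) b" and ?F2 = "pd (pd f b) a"
  assume ne: "?F1 z \<noteq> ?F2 z"
  define e where "e = \<bar>?F1 z - ?F2 z\<bar> / 2"
  have e: "e > 0" using ne by (simp add: e_def)
  have "isCont ?F1 z" "isCont ?F2 z"
    using d2a d2b differentiable_imp_continuous_within by blast+
  then obtain d1 d2 where d1: "d1 > 0" "\<And>w. dist w z < d1 \<Longrightarrow> dist (?F1 w) (?F1 z) < e"
    and d2: "d2 > 0" "\<And>w. dist w z < d2 \<Longrightarrow> dist (?F2 w) (?F2 z) < e"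
    using e unfolding continuous_at_eps_delta by meson
  obtain r where r: "r > 0" "ball z r \<subseteq> S" using S open_contains_ball by blast
  have "min d1 (min d2 r) > 0" using d1 d2 r by simp
  then obtain h where h: "h > 0" and close:
    "\<And>s t. 0 \<le> s \<Longrightarrow> s \<le> h \<Longrightarrow> 0 \<le> t \<Longrightarrow> t \<le> h \<Longrightarrow> dist (z + s *\<^sub>R a + t *\<^sub>R b) z < min d1 (min d2 r)"
    by (rule small_square_in_ball[where z = z and a = a and b = b]) blast
  have sqa: "z + s *\<^sub>R a + t *\<^sub>R b \<in> S" if "0 \<le> s" "s \<le> h" "0 \<le> t" "t \<le> h" for s t
    using close[OF that] r by (auto simp: dist_commute)
  have sqb: "z + s *\<^sub>R b + t *\<^sub>R a \<in> S" if "0 \<le> s" "s \<le> h" "0 \<le> t" "t \<le> h" for s t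
    using sqa[of t s] that by (simp add: add_ac)
  obtain s1 t1 where st1: "0 < s1" "s1 < h" "0 < t1" "t1 < h"
    and E1: "f (z + h *\<^sub>R a + h *\<^sub>R b) - f (z + h *\<^sub>R a) - f (z + h *\<^sub>R b) + f z
      = h * h * ?F1 (z + s1 *\<^sub>R a + t1 *\<^sub>R b)"
    using second_difference_mvt[OF h sqa d0 d1a] by blast
  obtain s2 t2 where st2: "0 < s2" "s2 < h" "0 < t2" "t2 < h"
    and E2: "f (z + h *\<^sub>R b + h *\<^sub>R a) - f (z + h *\<^sub>R b) - f (z + h *\<^sub>R a) + f z
      = h * h * ?F2 (z + s2 *\<^sub>R b + t2 *\<^sub>R a)"
    using second_difference_mvt[OF h sqb d0 d1b] by blast
  have "h * h * ?F1 (z + s1 *\<^sub>R a + t1 *\<^sub>R b) = h * h * ?F2 (z + s2 *\<^sub>R b + t2 *\<^sub>R a)"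
    using E1 E2 by (simp add: algebra_simps)
  then have "?F1 (z + s1 *\<^sub>R a + t1 *\<^sub>R b) = ?F2 (z + t2 *\<^sub>R a + s2 *\<^sub>R b)"
    using h by (simp add: add_ac)
  moreover have "dist (?F1 (z + s1 *\<^sub>R a + t1 *\<^sub>R b)) (?F1 z) < e"
    using d1(2) close[of s1 t1] st1 by auto
  moreover have "dist (?F2 (z + t2 *\<^sub>R a + s2 *\<^sub>R b)) (?F2 z) < e"
    using d2(2) close[of t2 s2] st2 by auto
  ultimately have "\<bar>?F1 z - ?F2 z\<bar> < 2 * e" by (simp add: dist_real_def)
  then show False by (simp add: e_def)
qed
text \<open>\<open>G\<close> and \<open>J\<close> in the coordinate frame \<open>(\<partial>\<^sub>i, \<partial>\<^sup>i)\<close>, with the matrices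
  \<open>(G\<^sub>i\<^sub>j)\<close>, \<open>(G\<^sup>i\<^sup>j)\<close>, \<open>(N\<^sub>i\<^sub>j)\<close> as parameters \<open>Gl\<close>, \<open>Gu\<close>, \<open>N\<close>;
  \<open>vert_coframe N X\<close> is the vector \<open>(\<delta>p\<^sub>i(X))\<^sub>i\<close>.\<close>

definition vert_coframe :: "real^'n^'n \<Rightarrow> 'n::finite pt \<Rightarrow> real^'n" where
  "vert_coframe N X = snd X - fst X v* N"

definition Jmat :: "real^'n^'n \<Rightarrow> real^'n^'n \<Rightarrow> real^'n^'n \<Rightarrow> 'n::finite pt \<Rightarrow> 'n pt" where
  "Jmat Gl Gu N X = (- (vert_coframe N X v* Gu), fst X v* Gl - (vert_coframe N X v* Gu) v* N)"

definition Gmat :: "real^'n^'n \<Rightarrow> real^'n^'n \<Rightarrow> real^'n^'n \<Rightarrow> 'n::finite pt \<Rightarrow> 'n pt \<Rightarrow> real" where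
  "Gmat Gl Gu N X Y = (fst X v* Gl) \<bullet> fst Y + (vert_coframe N X v* Gu) \<bullet> vert_coframe N Y"

lemma inner_vector_matrix_mult: "((x::real^'n) v* M) \<bullet> y = x \<bullet> (M *v y)"
  unfolding inner_vec_def vector_matrix_mult_def matrix_vector_mult_def
  by (simp add: sum_distrib_left sum_distrib_right mult_ac) (rule sum.swap)

lemma inner_vector_matrix_mult_sym:
  "transpose M = M \<Longrightarrow> ((x::real^'n) v* M) \<bullet> y = x \<bullet> (y v* M)"
  by (metis inner_vector_matrix_mult transpose_matrix_vector)

lemma vector_matrix_mult_uminus: "(- x) v* A = - ((x::real^'n) v* A)"
  by (simp add: vector_matrix_mult_def vec_eq_iff sum_negf)

lemma fst_Jmat: "fst (Jmat Gl Gu N X) = - (vert_coframe N X v* Gu)"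
  by (simp add: Jmat_def)

lemma snd_Jmat: "snd (Jmat Gl Gu N X) = fst X v* Gl - (vert_coframe N X v* Gu) v* N"
  by (simp add: Jmat_def)

lemma vert_coframe_Jmat: "vert_coframe N (Jmat Gl Gu N X) = fst X v* Gl"
  by (simp add: vert_coframe_def fst_Jmat snd_Jmat vector_matrix_mult_uminus)

lemma Jmat_Jmat:
  fixes Gl Gu N :: "real^'n::finite^'n"
  assumes "Gl ** Gu = mat 1" and "Gu ** Gl = mat 1"
  shows "Jmat Gl Gu N (Jmat Gl Gu N X) = - X"
proof -
  have "fst (Jmat Gl Gu N (Jmat Gl Gu N X)) = - fst X"
    using assms(1) by (simp add: fst_Jmat vert_coframe_Jmat vector_matrix_mul_assoc)
  moreover have "snd (Jmat Gl Gu N (Jmat Gl Gu N X)) = - vert_coframe N X - fst X v* N"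
    using assms by (simp add: snd_Jmat fst_Jmat vert_coframe_Jmat vector_matrix_mul_assoc
        vector_matrix_mult_uminus)
  ultimately show ?thesis by (simp add: prod_eq_iff vert_coframe_def)
qed

lemma Gmat_Jmat_Jmat:
  fixes Gl Gu N :: "real^'n::finite^'n"
  assumes "Gl ** Gu = mat 1" and "Gu ** Gl = mat 1"
    and "transpose Gl = Gl" and "transpose Gu = Gu"
  shows "Gmat Gl Gu N (Jmat Gl Gu N X) (Jmat Gl Gu N Y) = Gmat Gl Gu N X Y"
proof -
  have hor: "((vert_coframe N X v* Gu) v* Gl) \<bullet> (vert_coframe N Y v* Gu)
      = (vert_coframe N X v* Gu) \<bullet> vert_coframe N Y"
    using assms(2,4) by (simp add: vector_matrix_mul_assoc inner_vector_matrix_mult_sym)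
  have vert: "((fst X v* Gl) v* Gu) \<bullet> (fst Y v* Gl) = (fst X v* Gl) \<bullet> fst Y"
    using assms(1,3) by (simp add: vector_matrix_mul_assoc inner_vector_matrix_mult_sym)
  show ?thesis
    unfolding Gmat_def vert_coframe_Jmat using hor vert
    by (simp add: Jmat_def vector_matrix_mult_uminus)
qed

lemma Gmat_Jmat_eq_canonical:
  fixes Gl Gu N :: "real^'n::finite^'n"
  assumes "Gl ** Gu = mat 1" and "Gu ** Gl = mat 1"
    and "transpose Gl = Gl" and "transpose Gu = Gu" and "transpose N = N"
  shows "Gmat Gl Gu N X (Jmat Gl Gu N Y) = snd X \<bullet> fst Y - fst X \<bullet> snd Y"
proof -
  have "(fst X v* Gl) \<bullet> (vert_coframe N Y v* Gu) = fst X \<bullet> vert_coframe N Y"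
    using assms(2,3) by (simp add: inner_vector_matrix_mult_sym vector_matrix_mul_assoc)
  moreover have "(vert_coframe N X v* Gu) \<bullet> (fst Y v* Gl) = vert_coframe N X \<bullet> fst Y"
    using assms(1,4) by (simp add: inner_vector_matrix_mult_sym vector_matrix_mul_assoc)
  moreover have "(fst X v* N) \<bullet> fst Y = fst X \<bullet> (fst Y v* N)"
    using assms(5) by (simp add: inner_vector_matrix_mult_sym)
  ultimately show ?thesis
    unfolding Gmat_def vert_coframe_Jmat
    by (simp add: Jmat_def vector_matrix_mult_uminus vert_coframe_def inner_diff_left
        inner_diff_right algebra_simps)
qed

lemma rank_one_update_inverse:
  fixes A g :: "real^'n::finite^'n" and p q :: "real^'n"
  assumes gA: "g ** A = mat 1" and sA: "transpose A = A" and q: "q = A *v p"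
    and pq: "p \<bullet> q = 2 * t" and a: "\<alpha> \<noteq> 0" and b: "\<beta> \<noteq> 0" and d: "\<alpha> + 2 * t * c \<noteq> 0"
  shows "(\<chi> i j. g$i$j / \<beta> + c / (\<alpha> * \<beta>) * p$i * p$j) **
         (\<chi> i j. \<beta> * A$i$j - c * \<beta> / (\<alpha> + 2 * t * c) * q$i * q$j) = mat 1"
proof -
  define D where "D = \<alpha> + 2 * t * c"
  have Dnz: "D \<noteq> 0" using d by (simp add: D_def)
  have gA_entry: "(\<Sum>j\<in>UNIV. g$i$j * A$j$k) = mat 1 $ i $ k" for i k
    using gA by (simp add: matrix_matrix_mult_def vec_eq_iff)
  have pA: "(\<Sum>j\<in>UNIV. p$j * A$j$k) = q$k" for k
  proof -
    have "p v* A = q" using sA q by (metis transpose_matrix_vector)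
    then show ?thesis by (simp add: vector_matrix_mult_def vec_eq_iff mult.commute)
  qed
  have gq: "(\<Sum>j\<in>UNIV. g$i$j * q$j) = p$i" for i
  proof -
    have "g *v q = p" by (simp add: q matrix_vector_mul_assoc gA)
    then show ?thesis by (simp add: matrix_vector_mult_def vec_eq_iff)
  qed
  have pq': "(\<Sum>j\<in>UNIV. p$j * q$j) = 2 * t" using pq by (simp add: inner_vec_def)
  have coeff: "c / \<alpha> - c / D - c * c * 2 * t / (\<alpha> * D) = 0"
    using a d by (simp add: D_def field_simps)
  have "(\<Sum>j\<in>UNIV. (g$i$j / \<beta> + c / (\<alpha> * \<beta>) * p$i * p$j) * (\<beta> * A$j$k - c * \<beta> / D * q$j * q$k))
      = mat 1 $ i $ k" for i k
  proof -
    have "(\<Sum>j\<in>UNIV. (g$i$j / \<beta> + c / (\<alpha> * \<beta>) * p$i * p$j) * (\<beta> * A$j$k - c * \<beta> / D * q$j * q$k))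
      = (\<Sum>j\<in>UNIV. g$i$j * A$j$k - (c / D * q$k) * (g$i$j * q$j) + (c / \<alpha> * p$i) * (p$j * A$j$k)
           - (c * c / (\<alpha> * D) * p$i * q$k) * (p$j * q$j))"
      using a b Dnz by (intro sum.cong) (auto simp: field_simps)
    also have "\<dots> = mat 1 $ i $ k - (c / D * q$k) * p$i + (c / \<alpha> * p$i) * q$k
        - (c * c / (\<alpha> * D) * p$i * q$k) * (2 * t)"
      by (simp only: sum.distrib sum_subtractf sum_distrib_left[symmetric] gA_entry pA gq pq')
    also have "\<dots> = mat 1 $ i $ k + p$i * q$k * (c / \<alpha> - c / D - c * c * 2 * t / (\<alpha> * D))"
      by (simp add: algebra_simps)
    finally show ?thesis using coeff by simp
  qed
  then show ?thesis by (simp add: vec_eq_iff matrix_matrix_mult_def D_def)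
qed

lemma open_T0: "open U \<Longrightarrow> open (T0 U)"
proof -
  assume "open U"
  have "T0 U = U \<times> (UNIV - {0})" by (auto simp: T0_def)
  then show ?thesis using \<open>open U\<close> by (simp add: open_Times open_Diff)
qed

lemma cartan_open_T0: "cartan_structure U K \<Longrightarrow> open (T0 U)"
  unfolding cartan_structure_def by (intro open_T0) simp

lemma cartan_differentiable:
  assumes "cartan_structure U K" "w \<in> T0 U"
  shows "K differentiable (at w)" "pd K u differentiable (at w)"
    "pd (pd K u) u' differentiable (at w)"
proof -
  have "\<forall>us. iter_pd us K differentiable (at w)"
    using assms unfolding cartan_structure_def smooth_on_def by blast
  from this[rule_format, of "[]"] this[rule_format, of "[u]"] this[rule_format, of "[u', u]"]
  show "K differentiable (at w)" "pd K u differentiable (at w)"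
    "pd (pd K u) u' differentiable (at w)" by simp_all
qed

lemma ginvK_eq:
  assumes cs: "cartan_structure U K" and z: "z \<in> T0 U"
  shows "ginvK K i j z = pd K (dpv i) z * pd K (dpv j) z + K z * pd (pd K (dpv j)) (dpv i) z"
proof -
  have sq: "pd (\<lambda>w. (K w)^2) (dpv j) w = 2 * (K w * pd K (dpv j) w)" if "w \<in> T0 U" for w
    using pd_mult[of K w K "dpv j"] cartan_differentiable[OF cs that]
    by (simp add: power2_eq_square)
  have "ginvK K i j z = (1/2) * pd (\<lambda>w. 2 * (K w * pd K (dpv j) w)) (dpv i) z"
    unfolding ginvK_def using pd_cong_open[OF cartan_open_T0[OF cs] z sq] by simp
  also have "\<dots> = pd (\<lambda>w. K w * pd K (dpv j) w) (dpv i) z"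
    by (subst pd_cmult) (auto intro!: differentiable_mult cartan_differentiable[OF cs z])
  also have "\<dots> = K z * pd (pd K (dpv j)) (dpv i) z + pd K (dpv i) z * pd K (dpv j) z"
    by (rule pd_mult) (use cartan_differentiable[OF cs z] in auto)
  finally show ?thesis by simp
qed

lemma ginvK_sym:
  assumes cs: "cartan_structure U K" and z: "z \<in> T0 U"
  shows "ginvK K i j z = ginvK K j i z"
proof -
  have "pd (pd K (dpv j)) (dpv i) z = pd (pd K (dpv i)) (dpv j) z"
    by (rule pd_pd_commute[OF cartan_open_T0[OF cs] z]) (use cartan_differentiable[OF cs] z in auto)
  then show ?thesis using ginvK_eq[OF cs z, of i j] ginvK_eq[OF cs z, of j i] by simp
qed

lemma snd_eq_sum_dpv: "((0::real^'n::finite), p) = (\<Sum>j\<in>UNIV. p $ j *\<^sub>R dpv j)"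
proof -
  have "(\<Sum>j\<in>UNIV. p $ j *\<^sub>R (axis j 1 :: real^'n)) = p"
    by (simp add: vec_eq_iff axis_def if_distrib cong: if_cong)
  then show ?thesis by (simp add: prod_eq_iff fst_sum snd_sum dpv_def)
qed

text \<open>Euler's identity \<open>p\<^sub>i p\<^sup>i = K\<^sup>2\<close>: along the fibre ray \<open>t \<mapsto> (x, (1 + t) p)\<close> the
  function \<open>K\<close> is affine, so its first radial derivative is \<open>K\<close> and its second vanishes.\<close>

lemma pup_euler:
  fixes K :: "'n::finite pt \<Rightarrow> real"
  assumes cs: "cartan_structure U K" and z: "z \<in> T0 U"
  shows "(\<Sum>i\<in>UNIV. snd z $ i * pup K i z) = (K z)^2"
proof -
  obtain x p where zp: "z = (x, p)" by (cases z)
  have x: "x \<in> U" and p: "p \<noteq> 0" using z zp by (auto simp: T0_def)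
  define u where "u = ((0::real^'n), p)"
  have ray: "z + t *\<^sub>R u = (x, (1 + t) *\<^sub>R p)" for t
    by (simp add: zp u_def algebra_simps)
  have K_ray: "K (z + t *\<^sub>R u) = (1 + t) * K z" if "t > -1" for t
    using cs x that unfolding ray cartan_structure_def by (auto simp: zp)
  have ray_T0: "z + t *\<^sub>R u \<in> T0 U" if "t > -1" for t
    using that x p unfolding ray by (simp add: T0_def)
  have radial: "pd K u (z + t *\<^sub>R u) = K z" if t: "t > -1" for t
  proof (rule pd_eq_line_derivative)
    show "K differentiable (at (z + t *\<^sub>R u))" using cartan_differentiable[OF cs ray_T0[OF t]] by simp
    have "((\<lambda>r. (1 + t + r) * K z) has_real_derivative K z) (at 0)"
      by (auto intro!: derivative_eq_intros)
    moreover have "(1 + t + r) * K z = K (z + t *\<^sub>R u + r *\<^sub>R u)" if "r \<in> {-1-t<..}" for r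
      using K_ray[of "t + r"] that by (simp add: algebra_simps)
    ultimately show "((\<lambda>r. K (z + t *\<^sub>R u + r *\<^sub>R u)) has_real_derivative K z) (at 0)"
      using has_field_derivative_transform_within_open[of _ "K z" 0 "{-1-t<..}"] t by auto
  qed
  have radial2: "pd (pd K u) u z = 0"
  proof (rule pd_eq_line_derivative)
    show "pd K u differentiable (at z)" using cartan_differentiable[OF cs z] by simp
    show "((\<lambda>r. pd K u (z + r *\<^sub>R u)) has_real_derivative 0) (at 0)"
      by (rule has_field_derivative_transform_within_open[where f="\<lambda>r. K z" and S="{-1<..}"])
         (auto simp: radial)
  qed
  have p_dK: "(\<Sum>j\<in>UNIV. p $ j * pd K (dpv j) w) = pd K u w" if "w \<in> T0 U" for w
    unfolding u_def snd_eq_sum_dpv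
    by (rule pd_sum_direction[symmetric]) (use cartan_differentiable[OF cs that] in auto)
  have p_ddK: "(\<Sum>j\<in>UNIV. p $ j * pd (pd K (dpv j)) e z) = pd (pd K u) e z" for e
  proof -
    have "(\<Sum>j\<in>UNIV. p $ j * pd (pd K (dpv j)) e z) = pd (\<lambda>w. \<Sum>j\<in>UNIV. p $ j * pd K (dpv j) w) e z"
      by (rule pd_sum[symmetric]) (use cartan_differentiable[OF cs z] in auto)
    also have "\<dots> = pd (pd K u) e z" by (rule pd_cong_open[OF cartan_open_T0[OF cs] z p_dK])
    finally show ?thesis .
  qed
  have pup: "pup K i z = pd K (dpv i) z * K z + K z * pd (pd K u) (dpv i) z" for i
  proof -
    have "pup K i z = (\<Sum>j\<in>UNIV. (pd K (dpv i) z * pd K (dpv j) z + K z * pd (pd K (dpv j)) (dpv i) z) * p $ j)"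
      unfolding pup_def using ginvK_eq[OF cs z] zp by simp
    also have "\<dots> = pd K (dpv i) z * (\<Sum>j\<in>UNIV. p $ j * pd K (dpv j) z)
        + K z * (\<Sum>j\<in>UNIV. p $ j * pd (pd K (dpv j)) (dpv i) z)"
      by (simp add: sum.distrib sum_distrib_left algebra_simps)
    finally show ?thesis using p_dK[OF z] p_ddK radial[of 0] by simp
  qed
  have "(\<Sum>i\<in>UNIV. p $ i * pd (pd K u) (dpv i) z) = pd (pd K u) u z"
    unfolding u_def snd_eq_sum_dpv
    by (rule pd_sum_direction[symmetric]) (use cartan_differentiable[OF cs z] in auto)
  moreover have "(\<Sum>i\<in>UNIV. snd z $ i * pup K i z)
      = (\<Sum>i\<in>UNIV. p $ i * pd K (dpv i) z) * K z + K z * (\<Sum>i\<in>UNIV. p $ i * pd (pd K u) (dpv i) z)"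
    unfolding pup by (simp add: zp sum.distrib sum_distrib_left sum_distrib_right algebra_simps)
  ultimately show ?thesis using p_dK[OF z] radial2 radial[of 0] by (simp add: power2_eq_square)
qed

lemma gK_ginvK_inverse:
  fixes K :: "'n::finite pt \<Rightarrow> real"
  assumes cs: "cartan_structure U K" and z: "z \<in> T0 U"
  shows "(\<chi> i j. gK K i j z) ** (\<chi> i j. ginvK K i j z) = mat 1"
    and "(\<chi> i j. ginvK K i j z) ** (\<chi> i j. gK K i j z) = mat 1"
proof -
  define A where "A = (\<chi> i j. ginvK K i j z)"
  have "x = 0" if Ax: "A *v x = 0" for x
  proof (rule ccontr)
    assume "x \<noteq> 0"
    then have "(\<Sum>i\<in>UNIV. \<Sum>j\<in>UNIV. ginvK K i j z * x$i * x$j) > 0"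
      using cs z by (auto simp: cartan_structure_def)
    moreover have "(\<Sum>i\<in>UNIV. \<Sum>j\<in>UNIV. ginvK K i j z * x$i * x$j) = x \<bullet> (A *v x)"
      by (simp add: A_def inner_vec_def matrix_vector_mult_def sum_distrib_left mult_ac)
    ultimately show False using Ax by simp
  qed
  then obtain B where "B ** A = mat 1" using matrix_left_invertible_ker by blast
  then have "A ** B = mat 1 \<and> B ** A = mat 1" using matrix_left_right_inverse by blast
  then have "A ** matrix_inv A = mat 1 \<and> matrix_inv A ** A = mat 1"
    unfolding matrix_inv_def by (rule someI)
  moreover have "(\<chi> i j. gK K i j z) = matrix_inv A" by (simp add: gK_def vec_eq_iff A_def)
  ultimately show "(\<chi> i j. gK K i j z) ** (\<chi> i j. ginvK K i j z) = mat 1"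
    and "(\<chi> i j. ginvK K i j z) ** (\<chi> i j. gK K i j z) = mat 1" by (simp_all add: A_def)
qed

lemma gK_sym:
  fixes K :: "'n::finite pt \<Rightarrow> real"
  assumes cs: "cartan_structure U K" and z: "z \<in> T0 U"
  shows "gK K i j z = gK K j i z"
proof -
  define A where "A = (\<chi> i j. ginvK K i j z)"
  define g where "g = (\<chi> i j. gK K i j z)"
  have gA: "g ** A = mat 1" and Ag: "A ** g = mat 1"
    using gK_ginvK_inverse[OF cs z] by (simp_all add: A_def g_def)
  have "transpose A = A" by (simp add: A_def transpose_def vec_eq_iff ginvK_sym[OF cs z])
  then have "transpose g ** A = transpose (A ** g)" by (simp add: matrix_transpose_mul)
  then have "transpose g ** A = mat 1" by (simp add: Ag transpose_mat)
  then have "transpose g = g"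
    by (metis Ag matrix_mul_assoc matrix_mul_lid matrix_mul_rid)
  then show ?thesis by (simp add: g_def transpose_def vec_eq_iff)
qed

lemma NK_sym:
  fixes K :: "'n::finite pt \<Rightarrow> real"
  assumes cs: "cartan_structure U K" and z: "z \<in> T0 U"
  shows "NK K i j z = NK K j i z"
proof -
  have pd_gK: "pd (gK K a b) e z = pd (gK K b a) e z" for a b e
    by (rule pd_cong_open[OF cartan_open_T0[OF cs] z]) (rule gK_sym[OF cs])
  have "gam K h i j z = gam K h j i z" for h
    unfolding gam_def
    by (intro arg_cong[where f="\<lambda>x. (1/2) * x"] sum.cong refl)
       (simp only: pd_gK[of i _ "dxv j"] pd_gK[of _ j "dxv i"] pd_gK[of i j "dxv _"] add.commute)
  then show ?thesis unfolding NK_def gam0_def using pd_gK[of i j] by simp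
qed

abbreviation GlM :: "('n::finite pt \<Rightarrow> real) \<Rightarrow> (real \<Rightarrow> real) \<Rightarrow> real \<Rightarrow> real \<Rightarrow> 'n pt \<Rightarrow> real^'n^'n"
  where "GlM K v \<alpha> \<beta> z \<equiv> \<chi> i j. Glow K v \<alpha> \<beta> i j z"
abbreviation GuM :: "('n::finite pt \<Rightarrow> real) \<Rightarrow> (real \<Rightarrow> real) \<Rightarrow> real \<Rightarrow> real \<Rightarrow> 'n pt \<Rightarrow> real^'n^'n"
  where "GuM K v \<alpha> \<beta> z \<equiv> \<chi> i j. Gup K v \<alpha> \<beta> i j z"
abbreviation NM :: "('n::finite pt \<Rightarrow> real) \<Rightarrow> 'n pt \<Rightarrow> real^'n^'n"
  where "NM K z \<equiv> \<chi> i j. NK K i j z"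

lemma Jmap_eq_Jmat: "Jmap K v \<alpha> \<beta> z X = Jmat (GlM K v \<alpha> \<beta> z) (GuM K v \<alpha> \<beta> z) (NM K z) X"
proof -
  have sum_axis: "(\<Sum>k\<in>UNIV. c k *\<^sub>R (axis k 1 :: real^'n)) = (\<chi> k. c k)" for c
    by (simp add: vec_eq_iff axis_def if_distrib cong: if_cong)
  have dpc: "dpc K z X i = vert_coframe (NM K z) X $ i" for i
    by (simp add: dpc_def vert_coframe_def vector_matrix_mult_def mult.commute)
  have "fst (Jmap K v \<alpha> \<beta> z X) = fst (Jmat (GlM K v \<alpha> \<beta> z) (GuM K v \<alpha> \<beta> z) (NM K z) X)"
    by (simp add: Jmap_def Jmat_def fst_sum dpv_def deltav_def sum_axis dpc vec_eq_iff
        vector_matrix_mult_def sum_negf)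
  moreover have "snd (Jmap K v \<alpha> \<beta> z X) = snd (Jmat (GlM K v \<alpha> \<beta> z) (GuM K v \<alpha> \<beta> z) (NM K z) X)"
    by (simp add: Jmap_def Jmat_def snd_sum dpv_def deltav_def dxc_def dpc vec_eq_iff
        vector_matrix_mult_def sum_negf axis_def if_distrib sum_distrib_right
        sum_subtractf mult_ac cong: if_cong)
  ultimately show ?thesis by (simp add: prod_eq_iff)
qed

lemma Gmet_eq_Gmat: "Gmet K v \<alpha> \<beta> z X Y = Gmat (GlM K v \<alpha> \<beta> z) (GuM K v \<alpha> \<beta> z) (NM K z) X Y"
proof -
  have swap: "(\<Sum>i\<in>UNIV. \<Sum>j\<in>UNIV. M i j * x i * y j) = (\<Sum>j\<in>UNIV. y j * (\<Sum>i\<in>UNIV. M i j * x i))"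
    for M :: "'n \<Rightarrow> 'n \<Rightarrow> real" and x y
    by (subst sum.swap) (simp add: sum_distrib_left mult_ac)
  have dpc: "dpc K z X i = vert_coframe (NM K z) X $ i" for X i
    by (simp add: dpc_def vert_coframe_def vector_matrix_mult_def mult.commute)
  show ?thesis
    unfolding Gmet_def Gmat_def dxc_def dpc swap
    by (simp add: inner_vec_def vector_matrix_mult_def mult_ac)
qed

lemma GlM_GuM_inverse:
  fixes K :: "'n::finite pt \<Rightarrow> real"
  assumes cs: "cartan_structure U K" and z: "z \<in> T0 U"
    and "\<alpha> > 0" "\<beta> > 0" "\<alpha> + 2 * tauK K z * v (tauK K z) > 0"
  shows "GlM K v \<alpha> \<beta> z ** GuM K v \<alpha> \<beta> z = mat 1"
    and "GuM K v \<alpha> \<beta> z ** GlM K v \<alpha> \<beta> z = mat 1"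
proof -
  define A where "A = (\<chi> i j. ginvK K i j z)"
  define q where "q = (\<chi> i. pup K i z)"
  have "transpose A = A" by (simp add: A_def transpose_def vec_eq_iff ginvK_sym[OF cs z])
  moreover have "q = A *v snd z" by (simp add: q_def A_def matrix_vector_mult_def pup_def)
  moreover have "snd z \<bullet> q = 2 * tauK K z"
    using pup_euler[OF cs z] by (simp add: q_def inner_vec_def tauK_def)
  ultimately have "(\<chi> i j. (\<chi> i j. gK K i j z)$i$j / \<beta> + v (tauK K z) / (\<alpha> * \<beta>) * snd z$i * snd z$j) **
      (\<chi> i j. \<beta> * A$i$j - v (tauK K z) * \<beta> / (\<alpha> + 2 * tauK K z * v (tauK K z)) * q$i * q$j) = mat 1"
    using gK_ginvK_inverse(1)[OF cs z] assms(3-5)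
    by (intro rank_one_update_inverse) (auto simp: A_def)
  then show inv: "GlM K v \<alpha> \<beta> z ** GuM K v \<alpha> \<beta> z = mat 1"
    by (simp add: Glow_def Gup_def A_def q_def)
  then show "GuM K v \<alpha> \<beta> z ** GlM K v \<alpha> \<beta> z = mat 1"
    using matrix_left_right_inverse by blast
qed

lemma transpose_GlM:
  "cartan_structure U K \<Longrightarrow> z \<in> T0 U \<Longrightarrow> transpose (GlM K v \<alpha> \<beta> z) = GlM K v \<alpha> \<beta> z"
  by (simp add: transpose_def vec_eq_iff Glow_def gK_sym[of U K z] mult_ac)

lemma transpose_GuM:
  "cartan_structure U K \<Longrightarrow> z \<in> T0 U \<Longrightarrow> transpose (GuM K v \<alpha> \<beta> z) = GuM K v \<alpha> \<beta> z"
  by (simp add: transpose_def vec_eq_iff Gup_def ginvK_sym[of U K z] mult_ac)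

lemma transpose_NM: "cartan_structure U K \<Longrightarrow> z \<in> T0 U \<Longrightarrow> transpose (NM K z) = NM K z"
  by (simp add: transpose_def vec_eq_iff NK_sym[of U K z])

theorem mainTheorem1:
  fixes U :: "(real^'n::finite) set" and K :: "'n pt \<Rightarrow> real"
    and v :: "real \<Rightarrow> real" and \<alpha> \<beta> :: real
  assumes "cartan_structure U K"
    and "smooth_on_halfline v"
    and "\<alpha> > 0" and "\<beta> > 0"
    and "\<forall>z\<in>T0 U. \<alpha> + 2 * tauK K z * v (tauK K z) > 0"
  shows "\<forall>z\<in>T0 U.
      (\<forall>X. Jmap K v \<alpha> \<beta> z (Jmap K v \<alpha> \<beta> z X) = - X)
    \<and> (\<forall>X Y. Gmet K v \<alpha> \<beta> z (Jmap K v \<alpha> \<beta> z X) (Jmap K v \<alpha> \<beta> z Y) = Gmet K v \<alpha> \<beta> z X Y)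
    \<and> (\<forall>a b c. pd (\<lambda>w. theta K v \<alpha> \<beta> w b c) a z + pd (\<lambda>w. theta K v \<alpha> \<beta> w c a) b z
               + pd (\<lambda>w. theta K v \<alpha> \<beta> w a b) c z = 0)"
proof (intro ballI conjI allI)
  note cs = assms(1)
  have inv: "GlM K v \<alpha> \<beta> w ** GuM K v \<alpha> \<beta> w = mat 1" "GuM K v \<alpha> \<beta> w ** GlM K v \<alpha> \<beta> w = mat 1"
    if "w \<in> T0 U" for w
    using GlM_GuM_inverse[OF cs that assms(3,4)] assms(5) that by auto
  have theta: "theta K v \<alpha> \<beta> w X Y = snd X \<bullet> fst Y - fst X \<bullet> snd Y" if w: "w \<in> T0 U" for w X Y
    unfolding theta_def Gmet_eq_Gmat Jmap_eq_Jmat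
    by (rule Gmat_Jmat_eq_canonical[OF inv[OF w] transpose_GlM[OF cs w] transpose_GuM[OF cs w]
          transpose_NM[OF cs w]])
  fix z assume z: "z \<in> T0 U"
  show "Jmap K v \<alpha> \<beta> z (Jmap K v \<alpha> \<beta> z X) = - X" for X
    unfolding Jmap_eq_Jmat by (rule Jmat_Jmat[OF inv[OF z]])
  show "Gmet K v \<alpha> \<beta> z (Jmap K v \<alpha> \<beta> z X) (Jmap K v \<alpha> \<beta> z Y) = Gmet K v \<alpha> \<beta> z X Y" for X Y
    unfolding Jmap_eq_Jmat Gmet_eq_Gmat
    by (rule Gmat_Jmat_Jmat[OF inv[OF z] transpose_GlM[OF cs z] transpose_GuM[OF cs z]])
  show "pd (\<lambda>w. theta K v \<alpha> \<beta> w b c) a z + pd (\<lambda>w. theta K v \<alpha> \<beta> w c a) b z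
      + pd (\<lambda>w. theta K v \<alpha> \<beta> w a b) c z = 0" for a b c
    using pd_const_on_open[OF cartan_open_T0[OF cs] z theta] by simp
qed

end
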